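(* Let $I=\prod_{i=1}^d[a_i,b_i]$ with $a_i<b_i$, and let $f\in C(I)$ satisfy $f(\mathbf x)=0$ for all $\mathbf x\in\partial I$ and $f(\mathbf x_0)>0$ for some $\mathbf x_0$ in the interior $I^0$. Then there exists a function $$Q(\mathbf x)=A\sum_{i=1}^d(x_i-a_i)^2+C$$ with constants $A<0$ and $C\in\mathbb R$ such that $Q(\mathbf x)>0$ and $Q(\mathbf x)\ge f(\mathbf x)$ for all $\mathbf x\in I$, and there exists $\mathbf y\in I^0$ with $Q(\mathbf y)=f(\mathbf y)$. *)

theory Defs
  imports "HOL-Analysis.Analysis"
begin

end

theory Submission
  imports Defs
begin

(* Take A < 0 so small that -A p stays below f x0 on S and let C be the maximum of g = f - A p.
   On the frontier g = -A p < f x0 \<le> g x0, so the maximum is attained at an interior point y,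
   where A p + C touches f from above; the smallness of A also keeps A p + C positive. *)

lemma continuous_attains_sup_interior:
  fixes g :: "'a::t2_space \<Rightarrow> real"
  assumes "compact S" "continuous_on S g" "x0 \<in> S"
    and frontier_below: "\<And>z. z \<in> frontier S \<Longrightarrow> g z < g x0"
  obtains y where "y \<in> interior S" "\<And>z. z \<in> S \<Longrightarrow> g z \<le> g y"
proof -
  obtain y where y: "y \<in> S" and y_max: "\<forall>z\<in>S. g z \<le> g y"
    using continuous_attains_sup[OF assms(1) _ assms(2)] assms(3) by blast
  have "y \<notin> frontier S"
    using frontier_below y_max assms(3) by force
  then have "y \<in> interior S"
    using y compact_imp_closed[OF assms(1)] by (simp add: frontier_def)
  with y_max that show ?thesis by blast
qed

lemma exists_touching_from_above:
  fixes f p :: "'a::t2_space \<Rightarrow> real"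
  assumes "compact S" "continuous_on S f" "continuous_on S p"
    and f_frontier: "\<And>x. x \<in> frontier S \<Longrightarrow> f x = 0"
    and "x0 \<in> S" "f x0 > 0"
    and p_bounds: "\<And>x. x \<in> S \<Longrightarrow> 0 \<le> p x \<and> p x \<le> M"
  shows "\<exists>A C. A < 0 \<and> (\<forall>x\<in>S. A * p x + C > 0 \<and> f x \<le> A * p x + C) \<and>
           (\<exists>y\<in>interior S. A * p y + C = f y)"
proof -
  have "M \<ge> 0" using p_bounds \<open>x0 \<in> S\<close> by force
  define A where "A = - f x0 / (M + 1)"
  have "A < 0" using \<open>M \<ge> 0\<close> \<open>f x0 > 0\<close> by (simp add: A_def)
  have small: "- A * M < f x0"
    using \<open>M \<ge> 0\<close> \<open>f x0 > 0\<close> by (simp add: A_def field_simps)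
  have weight_le: "- A * p x \<le> - A * M" if "x \<in> S" for x
    using p_bounds[OF that] \<open>A < 0\<close> by (intro mult_left_mono) auto
  define g where "g x = f x - A * p x" for x
  have "continuous_on S g"
    unfolding g_def using assms(2,3) by (intro continuous_intros)
  have "f x0 \<le> g x0"
    using p_bounds[OF \<open>x0 \<in> S\<close>] \<open>A < 0\<close> by (simp add: g_def mult_nonpos_nonneg)
  have "g z < g x0" if "z \<in> frontier S" for z
  proof -
    have "z \<in> S"
      using that compact_imp_closed[OF assms(1)] using frontier_subset_closed by blast
    have "g z = - A * p z" using f_frontier[OF that] by (simp add: g_def)
    also have "\<dots> < f x0" using weight_le[OF \<open>z \<in> S\<close>] small by linarith
    finally show ?thesis using \<open>f x0 \<le> g x0\<close> by linarith
  qed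
  then obtain y where "y \<in> interior S" and y_max: "\<And>z. z \<in> S \<Longrightarrow> g z \<le> g y"
    using continuous_attains_sup_interior[OF assms(1) \<open>continuous_on S g\<close> \<open>x0 \<in> S\<close>] by blast
  have "A * p x + g y > 0" if "x \<in> S" for x
    using weight_le[OF that] small \<open>f x0 \<le> g x0\<close> y_max[OF \<open>x0 \<in> S\<close>] by linarith
  moreover have "f x \<le> A * p x + g y" if "x \<in> S" for x
    using y_max[OF that] by (simp add: g_def)
  moreover have "A * p y + g y = f y" by (simp add: g_def)
  ultimately show ?thesis using \<open>A < 0\<close> \<open>y \<in> interior S\<close> by blast
qed

lemma sum_square_diff_le_cbox_corner:
  fixes a b x :: "real ^ 'n"
  assumes "x \<in> cbox a b"
  shows "(\<Sum>i\<in>UNIV. (x $ i - a $ i)^2) \<le> (\<Sum>i\<in>UNIV. (b $ i - a $ i)^2)"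
proof (rule sum_mono)
  fix i
  have "a $ i \<le> x $ i" "x $ i \<le> b $ i" using assms by (auto simp: mem_box_cart)
  then show "(x $ i - a $ i)^2 \<le> (b $ i - a $ i)^2" by (intro power_mono) auto
qed

theorem theorem5p1:
  fixes a b :: "real ^ 'n" and f :: "real ^ 'n \<Rightarrow> real" and x0 :: "real ^ 'n"
  assumes ab: "\<forall>i. a $ i < b $ i"
    and cont: "continuous_on (cbox a b) f"
    and bd: "\<forall>x \<in> frontier (cbox a b). f x = 0"
    and x0: "x0 \<in> interior (cbox a b)" "f x0 > 0"
  shows "\<exists>A C :: real. A < 0 \<and>
           (\<forall>x \<in> cbox a b. A * (\<Sum>i\<in>UNIV. (x $ i - a $ i)^2) + C > 0
                          \<and> A * (\<Sum>i\<in>UNIV. (x $ i - a $ i)^2) + C \<ge> f x) \<and>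
           (\<exists>y \<in> interior (cbox a b). A * (\<Sum>i\<in>UNIV. (y $ i - a $ i)^2) + C = f y)"
proof (rule exists_touching_from_above[where M = "\<Sum>i\<in>UNIV. (b $ i - a $ i)^2"])
  show "continuous_on (cbox a b) (\<lambda>x. \<Sum>i\<in>UNIV. (x $ i - a $ i)^2)"
    by (intro continuous_intros)
  show "x0 \<in> cbox a b" using x0(1) interior_subset by blast
  show "0 \<le> (\<Sum>i\<in>UNIV. (x $ i - a $ i)^2) \<and>
        (\<Sum>i\<in>UNIV. (x $ i - a $ i)^2) \<le> (\<Sum>i\<in>UNIV. (b $ i - a $ i)^2)"
    if "x \<in> cbox a b" for x
    using sum_square_diff_le_cbox_corner[OF that] by (simp add: sum_nonneg)
qed (use cont bd x0 in auto)

end
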